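(* Let $\mathbf p,\mathbf q_1,\mathbf q_2,\mathbf r$ be words, $x$ a letter, and $\mathbf w=\mathbf px\mathbf q_1\mathbf q_2x\mathbf r$. If every letter occurring in $\mathbf q_1\mathbf q_2$ occurs at least twice in $\mathbf w$, then $\mathbf D_{15}$ satisfies the identity $\mathbf w\approx\mathbf px\mathbf q_1x\mathbf q_2x\mathbf r$.
   Context: Words are elements of the free monoid over a countably infinite alphabet; distinct symbols below are distinct letters. $\prod$ denotes concatenation in increasing index order; $\operatorname{var}\Sigma$ is the monoid variety defined by identities $\Sigma$. $S_N$ is the symmetric group on $\{1,\dots,N\}$, $i\tau$ the image of $i$. For $n,m,k\in\mathbb N$, $\tau\in S_{n+m+k}$: $\mathbf c_{n,m,k}[\tau]=\bigl(\prod_{i=1}^n z_it_i\bigr)xyt\bigl(\prod_{i=n+1}^{n+m} z_it_i\bigr)x\bigl(\prod_{i=1}^{n+m+k-1} z_{i\tau}y_i^2\bigr)z_{(n+m+k)\tau}y\bigl(\prod_{i=n+m+1}^{n+m+k} t_iz_i\bigr)$; $\mathbf c'_{n,m,k}[\tau]$ is obtained by swapping the first occurrences of $x$ and $y$; $\mathbf d_{n,m,k}[\tau]$, $\mathbf d'_{n,m,k}[\tau]$ are $\mathbf c_{n,m,k}[\tau]$, $\mathbf c'_{n,m,k}[\tau]$ read right to left. $\Phi_1$ is the set of all identities $\mathbf c_{n,m,k}[\tau]\approx\mathbf c'_{n,m,k}[\tau]$, $\mathbf d_{n,m,k}[\tau]\approx\mathbf d'_{n,m,k}[\tau]$. $\mathbf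 D_{15}=\operatorname{var}\{\Phi_1,\ xyx\approx x^2yx,\ xyx\approx xyx^2,\ (xy)^2\approx(yx)^2\}$. *)

theory Defs
  imports "HOL-Algebra.Group" "HOL-Combinatorics.Permutations"
begin

type_synonym word = "nat list"
type_synonym identity = "word \<times> word"

fun wval :: "('a, 'b) monoid_scheme \<Rightarrow> (nat \<Rightarrow> 'a) \<Rightarrow> word \<Rightarrow> 'a" where
  "wval M \<phi> [] = \<one>\<^bsub>M\<^esub>"
| "wval M \<phi> (a # w) = \<phi> a \<otimes>\<^bsub>M\<^esub> wval M \<phi> w"

definition sat_id :: "('a, 'b) monoid_scheme \<Rightarrow> identity \<Rightarrow> bool" where
  "sat_id M e \<longleftrightarrow> (\<forall>\<phi>. (\<forall>a. \<phi> a \<in> carrier M) \<longrightarrow> wval M \<phi> (fst e) = wval M \<phi> (snd e))"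

text \<open>Fixed distinct letters: x = 0, y = 1, t = 2, z_i = 3i, t_i = 3i+1, y_i = 3i+2 (i \<ge> 1).\<close>
definition lx :: nat where "lx = 0"
definition ly :: nat where "ly = 1"
definition lt :: nat where "lt = 2"
definition lz :: "nat \<Rightarrow> nat" where "lz i = 3 * i"
definition ltt :: "nat \<Rightarrow> nat" where "ltt i = 3 * i + 1"
definition lyy :: "nat \<Rightarrow> nat" where "lyy i = 3 * i + 2"

definition c_mid :: "nat \<Rightarrow> nat \<Rightarrow> nat \<Rightarrow> (nat \<Rightarrow> nat) \<Rightarrow> word" where
  "c_mid n m k \<tau> =
     [lt] @ concat (map (\<lambda>i. [lz i, ltt i]) [n+1..<n+m+1]) @ [lx]
     @ concat (map (\<lambda>i. [lz (\<tau> i), lyy i, lyy i]) [1..<n+m+k])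
     @ [lz (\<tau> (n+m+k)), ly]
     @ concat (map (\<lambda>i. [ltt i, lz i]) [n+m+1..<n+m+k+1])"

definition c_pre :: "nat \<Rightarrow> word" where
  "c_pre n = concat (map (\<lambda>i. [lz i, ltt i]) [1..<n+1])"

definition cw :: "nat \<Rightarrow> nat \<Rightarrow> nat \<Rightarrow> (nat \<Rightarrow> nat) \<Rightarrow> word" where
  "cw n m k \<tau> = c_pre n @ [lx, ly] @ c_mid n m k \<tau>"

definition cw' :: "nat \<Rightarrow> nat \<Rightarrow> nat \<Rightarrow> (nat \<Rightarrow> nat) \<Rightarrow> word" where
  "cw' n m k \<tau> = c_pre n @ [ly, lx] @ c_mid n m k \<tau>"

text \<open>Phi_1: all c \<approx> c' and d \<approx> d' (d = reversal of c); n+m+k \<ge> 1 so that the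
  letter z_{(n+m+k)\<tau>} is defined, \<tau> a permutation of {1..n+m+k}.\<close>
definition Phi1 :: "identity set" where
  "Phi1 = {e. \<exists>n m k \<tau>. 1 \<le> n + m + k \<and> \<tau> permutes {1..n+m+k} \<and>
      (e = (cw n m k \<tau>, cw' n m k \<tau>) \<or> e = (rev (cw n m k \<tau>), rev (cw' n m k \<tau>)))}"

definition D15_ids :: "identity set" where
  "D15_ids = Phi1 \<union>
     {([lx, ly, lx], [lx, lx, ly, lx]),
      ([lx, ly, lx], [lx, ly, lx, lx]),
      ([lx, ly, lx, ly], [ly, lx, ly, lx])}"

definition in_D15 :: "('a, 'b) monoid_scheme \<Rightarrow> bool" where
  "in_D15 M \<longleftrightarrow> monoid M \<and> (\<forall>e \<in> D15_ids. sat_id M e)"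

end

theory Submission
  imports Defs
begin

text \<open>The identities \<open>xyx \<approx> x\<^sup>2yx\<close> and \<open>xyx \<approx> xyx\<^sup>2\<close> allow squaring in place any
  letter that occurs a second time elsewhere in the word. This turns both sides into
  \<open>p x S\<^sub>1 S\<^sub>2 x r\<close> and \<open>p x S\<^sub>1 x S\<^sub>2 x r\<close>, where \<open>S\<^sub>1, S\<^sub>2\<close> are products of squares.
  Deleting the letters \<open>t, z\<^sub>i, t\<^sub>i\<close> from \<open>c\<^sub>0\<^sub>,\<^sub>0\<^sub>,\<^sub>k[id] \<approx> c'\<^sub>0\<^sub>,\<^sub>0\<^sub>,\<^sub>k[id]\<close> gives
  \<open>a x a S x \<approx> x a a S x\<close> for every product of squares \<open>S\<close>; together with
  \<open>xyx \<approx> x\<^sup>2yx\<close> and \<open>(xy)\<^sup>2 \<approx> (yx)\<^sup>2\<close> this yields \<open>x a\<^sup>2 S x \<approx> x a\<^sup>2 x S x\<close>, and an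
  induction over the squares of \<open>S\<^sub>1\<close> moves an \<open>x\<close> between \<open>S\<^sub>1\<close> and \<open>S\<^sub>2\<close>.\<close>

fun double_letters :: "word \<Rightarrow> word" where
  "double_letters [] = []"
| "double_letters (a # w) = a # a # double_letters w"

lemma double_letters_append: "double_letters (u @ v) = double_letters u @ double_letters v"
  by (induction u) auto

lemma count_list_double_letters: "count_list (double_letters w) a = 2 * count_list w a"
  by (induction w) auto

fun sq_prod :: "('a, 'b) monoid_scheme \<Rightarrow> 'a list \<Rightarrow> 'a" where
  "sq_prod M [] = \<one>\<^bsub>M\<^esub>"
| "sq_prod M (c # cs) = c \<otimes>\<^bsub>M\<^esub> (c \<otimes>\<^bsub>M\<^esub> sq_prod M cs)"

context monoid
begin

lemma wval_closed: "(\<And>a. \<phi> a \<in> carrier G) \<Longrightarrow> wval G \<phi> w \<in> carrier G"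
  by (induction w) auto

lemma wval_append:
  "(\<And>a. \<phi> a \<in> carrier G) \<Longrightarrow> wval G \<phi> (u @ v) = wval G \<phi> u \<otimes> wval G \<phi> v"
  by (induction u) (auto simp: m_assoc wval_closed)

lemma sq_prod_closed: "set cs \<subseteq> carrier G \<Longrightarrow> sq_prod G cs \<in> carrier G"
  by (induction cs) auto

lemma sq_prod_append:
  "set cs \<subseteq> carrier G \<Longrightarrow> set ds \<subseteq> carrier G \<Longrightarrow>
    sq_prod G (cs @ ds) = sq_prod G cs \<otimes> sq_prod G ds"
  by (induction cs) (auto simp: m_assoc sq_prod_closed)

lemma wval_double_letters:
  "(\<And>a. \<phi> a \<in> carrier G) \<Longrightarrow> wval G \<phi> (double_letters w) = sq_prod G (map \<phi> w)"
  by (induction w) auto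

lemma wval_square_blocks:
  "(\<And>a. \<phi> a \<in> carrier G) \<Longrightarrow> (\<And>i. i \<in> set is \<Longrightarrow> \<phi> (lz i) = \<one>) \<Longrightarrow>
    wval G \<phi> (concat (map (\<lambda>i. [lz i, lyy i, lyy i]) is)) = sq_prod G (map (\<phi> \<circ> lyy) is)"
  by (induction "is") (auto simp: wval_append sq_prod_closed image_subset_iff)

lemma wval_trivial_blocks:
  "(\<And>a. \<phi> a \<in> carrier G) \<Longrightarrow> (\<And>i. i \<in> set is \<Longrightarrow> \<phi> (ltt i) = \<one> \<and> \<phi> (lz i) = \<one>) \<Longrightarrow>
    wval G \<phi> (concat (map (\<lambda>i. [ltt i, lz i]) is)) = \<one>"
  by (induction "is") (auto simp: wval_append)

end

locale D15_monoid = monoid +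
  assumes D15_ids_sat: "e \<in> D15_ids \<Longrightarrow> sat_id G e"

lemma D15_monoidI: "in_D15 M \<Longrightarrow> D15_monoid M"
  unfolding in_D15_def D15_monoid_def D15_monoid_axioms_def by blast

context D15_monoid
begin

text \<open>The laws below carry an arbitrary right factor \<open>z\<close>, so that they apply inside the
  right-nested products produced by \<open>m_assoc\<close>.\<close>

lemma D15_law:
  "(u, v) \<in> D15_ids \<Longrightarrow> (\<And>a. \<phi> a \<in> carrier G) \<Longrightarrow> z \<in> carrier G \<Longrightarrow>
    wval G \<phi> u \<otimes> z = wval G \<phi> v \<otimes> z"
  using D15_ids_sat unfolding sat_id_def by fastforce

lemma xyx_eq_xxyx:
  assumes "x \<in> carrier G" "y \<in> carrier G" "z \<in> carrier G"
  shows "x \<otimes> (y \<otimes> (x \<otimes> z)) = x \<otimes> (x \<otimes> (y \<otimes> (x \<otimes> z)))"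
  using D15_law[of "[lx, ly, lx]" "[lx, lx, ly, lx]" "\<lambda>a. if a = lx then x else y" z] assms
  by (simp add: D15_ids_def lx_def ly_def m_assoc)

lemma xyx_eq_xyxx:
  assumes "x \<in> carrier G" "y \<in> carrier G" "z \<in> carrier G"
  shows "x \<otimes> (y \<otimes> (x \<otimes> z)) = x \<otimes> (y \<otimes> (x \<otimes> (x \<otimes> z)))"
  using D15_law[of "[lx, ly, lx]" "[lx, ly, lx, lx]" "\<lambda>a. if a = lx then x else y" z] assms
  by (simp add: D15_ids_def lx_def ly_def m_assoc)

lemma xyxy_eq_yxyx:
  assumes "x \<in> carrier G" "y \<in> carrier G" "z \<in> carrier G"
  shows "x \<otimes> (y \<otimes> (x \<otimes> (y \<otimes> z))) = y \<otimes> (x \<otimes> (y \<otimes> (x \<otimes> z)))"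
  using D15_law[of "[lx, ly, lx, ly]" "[ly, lx, ly, lx]" "\<lambda>a. if a = lx then x else y" z] assms
  by (simp add: D15_ids_def lx_def ly_def m_assoc)

lemma axa_squares_x_eq_xaa_squares_x:
  assumes a: "a \<in> carrier G" and x: "x \<in> carrier G" and ds: "set ds \<subseteq> carrier G"
    and z: "z \<in> carrier G"
  shows "a \<otimes> (x \<otimes> (a \<otimes> (sq_prod G ds \<otimes> (x \<otimes> z)))) =
         x \<otimes> (a \<otimes> (a \<otimes> (sq_prod G ds \<otimes> (x \<otimes> z))))"
proof -
  define k where "k = Suc (length ds)"
  define \<psi> where "\<psi> j = (if j = lx then a else if j = ly then x
      else if j mod 3 = 2 \<and> 1 \<le> j div 3 \<and> j div 3 < k then ds ! (j div 3 - 1) else \<one>)" for j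
  have \<psi>_carrier: "\<psi> j \<in> carrier G" for j
    using a x ds by (auto simp: \<psi>_def k_def)
  have \<psi>_lz: "\<psi> (lz i) = \<one>" and \<psi>_ltt: "\<psi> (ltt i) = \<one>" if "1 \<le> i" for i
    using that by (auto simp: \<psi>_def lz_def ltt_def lx_def ly_def)
  have squares: "wval G \<psi> (concat (map (\<lambda>i. [lz i, lyy i, lyy i]) [1..<k])) = sq_prod G ds"
  proof -
    have "map (\<psi> \<circ> lyy) [1..<k] = ds"
      by (rule nth_equalityI) (simp_all add: \<psi>_def lyy_def lx_def ly_def k_def del: upt_Suc)
    then show ?thesis
      using \<psi>_carrier \<psi>_lz by (subst wval_square_blocks) auto
  qed
  have trivial: "wval G \<psi> (concat (map (\<lambda>i. [ltt i, lz i]) [1..<k + 1])) = \<one>"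
    using \<psi>_carrier \<psi>_lz \<psi>_ltt by (intro wval_trivial_blocks) auto
  have letters: "\<psi> lx = a" "\<psi> ly = x" "\<psi> lt = \<one>" "\<psi> (lz k) = \<one>"
    using \<psi>_lz by (simp_all add: \<psi>_def lx_def ly_def lt_def k_def)
  have "(cw 0 0 k id, cw' 0 0 k id) \<in> Phi1"
    unfolding Phi1_def by (intro CollectI exI[of _ 0] exI[of _ k] exI[of _ id]) (simp add: k_def)
  then have "wval G \<psi> (cw 0 0 k id) \<otimes> z = wval G \<psi> (cw' 0 0 k id) \<otimes> z"
    using \<psi>_carrier z by (intro D15_law) (simp_all add: D15_ids_def)
  then show ?thesis
    unfolding cw_def cw'_def c_mid_def c_pre_def
    using a x z \<psi>_carrier squares trivial letters sq_prod_closed[OF ds]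
    by (simp add: wval_append m_assoc del: upt_Suc)
qed

lemma axax_eq_xaax:
  assumes "a \<in> carrier G" "x \<in> carrier G" "z \<in> carrier G"
  shows "a \<otimes> (x \<otimes> (a \<otimes> (x \<otimes> z))) = x \<otimes> (a \<otimes> (a \<otimes> (x \<otimes> z)))"
  using axa_squares_x_eq_xaa_squares_x[of a x "[]" z] assms by simp

lemma insert_x_after_square:
  assumes a: "a \<in> carrier G" and x: "x \<in> carrier G" and S: "S \<in> carrier G"
    and z: "z \<in> carrier G"
    and axaSx: "a \<otimes> (x \<otimes> (a \<otimes> (S \<otimes> (x \<otimes> z)))) = x \<otimes> (a \<otimes> (a \<otimes> (S \<otimes> (x \<otimes> z))))"
  shows "x \<otimes> (a \<otimes> (a \<otimes> (S \<otimes> (x \<otimes> z)))) = x \<otimes> (a \<otimes> (a \<otimes> (x \<otimes> (S \<otimes> (x \<otimes> z)))))"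
proof -
  have "x \<otimes> (a \<otimes> (a \<otimes> (S \<otimes> (x \<otimes> z)))) = a \<otimes> (x \<otimes> (a \<otimes> (S \<otimes> (x \<otimes> z))))"
    using axaSx by simp
  also have "\<dots> = a \<otimes> (x \<otimes> (x \<otimes> (a \<otimes> (S \<otimes> (x \<otimes> z)))))"
    using xyx_eq_xxyx[of x "a \<otimes> S" z] a x S z by (simp add: m_assoc)
  also have "\<dots> = x \<otimes> (a \<otimes> (x \<otimes> (a \<otimes> (S \<otimes> (x \<otimes> z)))))"
    using axax_eq_xaax[of x a "S \<otimes> (x \<otimes> z)"] a x S z by simp
  also have "\<dots> = a \<otimes> (x \<otimes> (a \<otimes> (x \<otimes> (S \<otimes> (x \<otimes> z)))))"
    using xyxy_eq_yxyx[of x a "S \<otimes> (x \<otimes> z)"] a x S z by simp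
  also have "\<dots> = x \<otimes> (a \<otimes> (a \<otimes> (x \<otimes> (S \<otimes> (x \<otimes> z)))))"
    using axax_eq_xaax[of a x "S \<otimes> (x \<otimes> z)"] a x S z by simp
  finally show ?thesis .
qed

lemma insert_x_between_squares:
  assumes cs: "set cs \<subseteq> carrier G" and ds: "set ds \<subseteq> carrier G"
    and x: "x \<in> carrier G" and z: "z \<in> carrier G"
  shows "x \<otimes> (sq_prod G cs \<otimes> (sq_prod G ds \<otimes> (x \<otimes> z))) =
         x \<otimes> (sq_prod G cs \<otimes> (x \<otimes> (sq_prod G ds \<otimes> (x \<otimes> z))))"
  using cs
proof (induction cs)
  case Nil
  show ?case
    using xyx_eq_xxyx[of x "sq_prod G ds" z] x z sq_prod_closed[OF ds] by simp
next
  case (Cons a cs)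
  then have a: "a \<in> carrier G" and cs: "set cs \<subseteq> carrier G" by auto
  note closed = a x z sq_prod_closed[OF cs] sq_prod_closed[OF ds]
  have "x \<otimes> (sq_prod G (a # cs) \<otimes> (sq_prod G ds \<otimes> (x \<otimes> z))) =
        x \<otimes> (a \<otimes> (a \<otimes> (sq_prod G (cs @ ds) \<otimes> (x \<otimes> z))))"
    using closed cs ds by (simp add: sq_prod_append m_assoc)
  also have "\<dots> = x \<otimes> (a \<otimes> (a \<otimes> (x \<otimes> (sq_prod G (cs @ ds) \<otimes> (x \<otimes> z)))))"
    using cs ds closed
    by (intro insert_x_after_square axa_squares_x_eq_xaa_squares_x sq_prod_closed) auto
  also have "\<dots> = x \<otimes> (a \<otimes> (a \<otimes> (x \<otimes> (sq_prod G cs \<otimes> (x \<otimes> (sq_prod G ds \<otimes> (x \<otimes> z)))))))"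
    using Cons.IH[OF cs] closed cs ds by (simp add: sq_prod_append m_assoc)
  also have "\<dots> = x \<otimes> (sq_prod G (a # cs) \<otimes> (x \<otimes> (sq_prod G ds \<otimes> (x \<otimes> z))))"
    using insert_x_after_square[of a x "sq_prod G cs" "sq_prod G ds \<otimes> (x \<otimes> z)"]
      axa_squares_x_eq_xaa_squares_x[OF a x cs, of "sq_prod G ds \<otimes> (x \<otimes> z)"] closed
    by (simp add: m_assoc)
  finally show ?case .
qed

lemma wval_repeat_letter:
  assumes \<phi>: "\<And>a. \<phi> a \<in> carrier G" and b: "b \<in> set u \<or> b \<in> set v"
  shows "wval G \<phi> (u @ b # v) = wval G \<phi> (u @ b # b # v)"
  using b
proof
  assume "b \<in> set u"
  then obtain u1 u2 where "u = u1 @ b # u2" by (meson split_list)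
  then show ?thesis
    using xyx_eq_xyxx[of "\<phi> b" "wval G \<phi> u2" "wval G \<phi> v"] \<phi>
    by (simp add: wval_append wval_closed m_assoc)
next
  assume "b \<in> set v"
  then obtain v1 v2 where "v = v1 @ b # v2" by (meson split_list)
  then show ?thesis
    using xyx_eq_xxyx[of "\<phi> b" "wval G \<phi> v1" "wval G \<phi> v2"] \<phi>
    by (simp add: wval_append wval_closed m_assoc)
qed

lemma wval_double_repeated_letters:
  assumes \<phi>: "\<And>a. \<phi> a \<in> carrier G"
    and "\<forall>a \<in> set w. 2 \<le> count_list (u @ w @ v) a"
  shows "wval G \<phi> (u @ w @ v) = wval G \<phi> (u @ double_letters w @ v)"
  using assms(2)
proof (induction w arbitrary: u)
  case Nil
  then show ?case by simp
next
  case (Cons b w)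
  have "b \<in> set u \<or> b \<in> set (w @ v)"
  proof (rule ccontr)
    assume "\<not> (b \<in> set u \<or> b \<in> set (w @ v))"
    then have "count_list (u @ b # w @ v) b = 1"
      by (simp add: count_notin)
    moreover have "2 \<le> count_list (u @ b # w @ v) b"
      using Cons.prems by simp
    ultimately show False by simp
  qed
  then have "wval G \<phi> (u @ b # w @ v) = wval G \<phi> ((u @ [b, b]) @ w @ v)"
    using wval_repeat_letter[OF \<phi>, of b u "w @ v"] by simp
  also have "\<dots> = wval G \<phi> ((u @ [b, b]) @ double_letters w @ v)"
    by (rule Cons.IH) (use Cons.prems in auto)
  finally show ?case by simp
qed

lemma wval_insert_x_between_doubled:
  assumes "\<And>a. \<phi> a \<in> carrier G"
  shows "wval G \<phi> (x # double_letters q1 @ double_letters q2 @ x # r) =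
         wval G \<phi> (x # double_letters q1 @ x # double_letters q2 @ x # r)"
  using insert_x_between_squares[of "map \<phi> q1" "map \<phi> q2" "\<phi> x" "wval G \<phi> r"] assms
  by (auto simp: wval_append wval_closed wval_double_letters m_assoc)

end

theorem lemma6p3:
  fixes p q1 q2 r :: word and x :: nat and M :: "('a, 'b) monoid_scheme"
  assumes "in_D15 M"
    and "\<forall>a \<in> set (q1 @ q2). 2 \<le> count_list (p @ [x] @ q1 @ q2 @ [x] @ r) a"
  shows "sat_id M (p @ [x] @ q1 @ q2 @ [x] @ r, p @ [x] @ q1 @ [x] @ q2 @ [x] @ r)"
  unfolding sat_id_def fst_conv snd_conv
proof (intro allI impI)
  interpret D15_monoid M
    using assms(1) by (rule D15_monoidI)
  fix \<phi> :: "nat \<Rightarrow> 'a"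
  assume "\<forall>a. \<phi> a \<in> carrier M"
  then have \<phi>: "\<phi> a \<in> carrier M" for a by blast
  have "wval M \<phi> (p @ [x] @ q1 @ q2 @ [x] @ r) =
        wval M \<phi> (p @ x # double_letters q1 @ double_letters q2 @ x # r)"
    using wval_double_repeated_letters[OF \<phi>, of "q1 @ q2" "p @ [x]" "x # r"] assms(2)
    by (simp add: double_letters_append)
  also have "\<dots> = wval M \<phi> (p @ x # double_letters q1 @ x # double_letters q2 @ x # r)"
    using wval_insert_x_between_doubled[of \<phi> x q1 q2 r] \<phi> by (simp add: wval_append)
  also have "\<dots> = wval M \<phi> (p @ x # double_letters q1 @ x # q2 @ x # r)"
    using wval_double_repeated_letters[OF \<phi>, of q2 "p @ x # double_letters q1 @ [x]" "x # r"] assms(2)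
    by (force simp: count_list_double_letters)
  also have "\<dots> = wval M \<phi> (p @ [x] @ q1 @ [x] @ q2 @ [x] @ r)"
    using wval_double_repeated_letters[OF \<phi>, of q1 "p @ [x]" "x # q2 @ x # r"] assms(2)
    by force
  finally show "wval M \<phi> (p @ [x] @ q1 @ q2 @ [x] @ r) = wval M \<phi> (p @ [x] @ q1 @ [x] @ q2 @ [x] @ r)" .
qed

end
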